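(* Let $(Q,\cdot)$ be a magma and $e\in Q$. Then $(Q,\cdot,e)$ is a double Ward quasigroup if and only if $(Q,\cdot)$ is cancellative and satisfies $(ee\cdot xz)(ey\cdot z)=xy$ for all $x,y,z\in Q$.
   Context: A quasigroup is a magma in which $ax=b$ and $ya=b$ have unique solutions for all $a,b$. A double Ward quasigroup $(Q,\cdot,e)$ is a quasigroup with an element $e$ such that $(ee\cdot xz)(ey\cdot z)=xy$ for all $x,y,z$. A magma is cancellative if $ax=ay$ implies $x=y$ and $xa=ya$ implies $x=y$. *)

theory Defs
  imports Main
begin

definition quasigroup :: "('a \<Rightarrow> 'a \<Rightarrow> 'a) \<Rightarrow> bool" where
  "quasigroup m \<longleftrightarrow> (\<forall>a b. (\<exists>!x. m a x = b) \<and> (\<exists>!y. m y a = b))"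

definition cancellative :: "('a \<Rightarrow> 'a \<Rightarrow> 'a) \<Rightarrow> bool" where
  "cancellative m \<longleftrightarrow> (\<forall>a x y. m a x = m a y \<longrightarrow> x = y) \<and> (\<forall>a x y. m x a = m y a \<longrightarrow> x = y)"

definition double_ward_quasigroup :: "('a \<Rightarrow> 'a \<Rightarrow> 'a) \<Rightarrow> 'a \<Rightarrow> bool" where
  "double_ward_quasigroup m e \<longleftrightarrow> quasigroup m \<and>
     (\<forall>x y z. m (m (m e e) (m x z)) (m (m e y) z) = m x y)"

end

theory Submission
  imports Defs
begin

text \<open>In the model \<open>x \<cdot> y = - x - y\<close> of an abelian group with \<open>e = 0\<close>, the element \<open>e\<close>
  behaves like a neutral element and every element solves \<open>a \<cdot> x = b\<close> explicitly:
  \<open>x = b \<cdot> a\<close>. Cancellativity together with the Ward identity forces exactly this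
  behaviour: it yields \<open>e \<cdot> e = e\<close>, \<open>e \<cdot> (e \<cdot> a) = a\<close> and finally the division identities
  \<open>a \<cdot> (b \<cdot> a) = b\<close> and \<open>(a \<cdot> b) \<cdot> a = b\<close>, which provide the solutions required of a
  quasigroup. Uniqueness of solutions is cancellativity.\<close>

lemma quasigroup_imp_cancellative:
  assumes "quasigroup m"
  shows "cancellative m"
  using assms unfolding quasigroup_def cancellative_def by metis

lemma quasigroupI:
  assumes "cancellative m"
    and "\<And>a b. \<exists>x. m a x = b"
    and "\<And>a b. \<exists>y. m y a = b"
  shows "quasigroup m"
  using assms unfolding quasigroup_def cancellative_def by metis

locale cancellative_ward_magma =
  fixes mult :: "'a \<Rightarrow> 'a \<Rightarrow> 'a" (infixl "\<cdot>" 70) and e :: 'a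
  assumes ward: "(e \<cdot> e \<cdot> (x \<cdot> z)) \<cdot> (e \<cdot> y \<cdot> z) = x \<cdot> y"
    and cancellative: "cancellative (\<cdot>)"
begin

lemma left_cancel: "a \<cdot> x = a \<cdot> y \<Longrightarrow> x = y"
  using cancellative unfolding cancellative_def by blast

lemma right_cancel: "x \<cdot> a = y \<cdot> a \<Longrightarrow> x = y"
  using cancellative unfolding cancellative_def by blast

lemma ward_shift: "(e \<cdot> e \<cdot> (x \<cdot> p)) \<cdot> (e \<cdot> q \<cdot> (e \<cdot> p \<cdot> c)) = e \<cdot> e \<cdot> (x \<cdot> c) \<cdot> q"
  using ward[where x = "e \<cdot> e \<cdot> (x \<cdot> c)" and y = q and z = "e \<cdot> p \<cdot> c"]
  by (simp only: ward[where x = x and y = p and z = c])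

lemma left_e_right_inverse: "e \<cdot> a \<cdot> (e \<cdot> b \<cdot> b) = a"
  using ward_shift[where p = b and q = a and c = b] by (rule left_cancel)

lemma e_idem: "e \<cdot> e = e"
proof -
  have "e \<cdot> e \<cdot> a \<cdot> y = e \<cdot> a \<cdot> y" for a y
    using ward[where x = "e \<cdot> a" and y = y and z = "e \<cdot> e \<cdot> e"]
    by (simp only: left_e_right_inverse)
  then have "e \<cdot> e \<cdot> e = e \<cdot> e"
    by (rule right_cancel)
  then show ?thesis
    by (rule right_cancel)
qed

lemma ward_e: "(e \<cdot> (x \<cdot> z)) \<cdot> (e \<cdot> y \<cdot> z) = x \<cdot> y"
  using ward by (simp only: e_idem)

lemma left_e_self: "e \<cdot> a \<cdot> a = e"
proof -
  have "e \<cdot> c \<cdot> (e \<cdot> a \<cdot> a) = e \<cdot> c \<cdot> (e \<cdot> e \<cdot> e)" for c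
    by (simp only: left_e_right_inverse)
  then have "e \<cdot> a \<cdot> a = e \<cdot> e \<cdot> e"
    by (rule left_cancel)
  then show ?thesis
    by (simp only: e_idem)
qed

lemma left_e_right_e: "e \<cdot> a \<cdot> e = a"
  using left_e_right_inverse[where b = a] by (simp only: left_e_self)

lemma e_involutive: "e \<cdot> (e \<cdot> a) = a"
  using ward_e[where x = "e \<cdot> a" and y = e and z = a]
  by (simp only: left_e_self left_e_right_e e_idem)

lemma left_division: "a \<cdot> (b \<cdot> a) = b"
  using ward_e[where x = e and y = "e \<cdot> b" and z = a] by (simp only: e_involutive)

lemma right_division: "a \<cdot> b \<cdot> a = b"
  using left_division[where a = "a \<cdot> b" and b = b] by (simp only: left_division)

lemma quasigroup: "quasigroup (\<cdot>)"
  using cancellative left_division right_division by (blast intro: quasigroupI)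

end

theorem theorem4p11:
  fixes m :: "'a \<Rightarrow> 'a \<Rightarrow> 'a" and e :: 'a
  shows "double_ward_quasigroup m e \<longleftrightarrow>
    (cancellative m \<and> (\<forall>x y z. m (m (m e e) (m x z)) (m (m e y) z) = m x y))"
proof
  assume "double_ward_quasigroup m e"
  then show "cancellative m \<and> (\<forall>x y z. m (m (m e e) (m x z)) (m (m e y) z) = m x y)"
    unfolding double_ward_quasigroup_def by (blast intro: quasigroup_imp_cancellative)
next
  assume "cancellative m \<and> (\<forall>x y z. m (m (m e e) (m x z)) (m (m e y) z) = m x y)"
  then interpret cancellative_ward_magma m e
    by unfold_locales blast+
  show "double_ward_quasigroup m e"
    unfolding double_ward_quasigroup_def using quasigroup ward by blast
qed

end
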